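(* Let $(A,f)$ be a finite-dimensional quadratic Lie algebra over a field $\mathbb{K}$ of characteristic zero, let $B$ be a finite-dimensional Lie algebra and $\phi\colon B\to \mathrm{Der}_f(A)$ a Lie algebra homomorphism, and let $(A_B,f_B)$ be the double extension of $(A,f)$ by $(B,\phi)$. If $A_B$ is $t$-step nilpotent, then $A$ is $n$-step nilpotent for some $n\leq t$.
   Context: A quadratic Lie algebra $(A,f)$ is a Lie algebra $A$ with a non-degenerate symmetric bilinear form $f$ that is invariant: $f([x,y],z)+f(y,[x,z])=0$ for all $x,y,z$. $\mathrm{Der}_f(A)$ denotes the Lie algebra of derivations $d$ of $A$ with $f(d(x),y)+f(x,d(y))=0$. Let $w\colon A\times A\to B^*$ be $w(a,a')(b)=f(\phi(b)(a),a')$, and $\mathrm{ad}^*$ the coadjoint action, $\mathrm{ad}^*(b)(\beta)(b')=-\beta([b,b'])$. The double extension is the vector space $A_B=B\oplus A\oplus B^*$ with bracket $[b+a+\beta,b'+a'+\beta']=[b,b']_B+\phi(b)(a')-\phi(b')(a)+[a,a']_A+w(a,a')+\mathrm{ad}^*(b)(\beta')-\mathrm{ad}^*(b')(\beta)$ and form $f_B(b+a+\beta,b'+a'+\beta')=\beta(b')+\beta'(b)+f(a,a')$. A Lie algebra $L$ is $t$-step nilpotent if $L^{t+1}=0$ and $L^t\neq 0$, where $L^1=L$, $L^{k+1}=[L,L^k]$. *)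

theory Defs
  imports Complex_Main
begin

inductive_set lspan :: "'v \<Rightarrow> ('v \<Rightarrow> 'v \<Rightarrow> 'v) \<Rightarrow> ('k \<Rightarrow> 'v \<Rightarrow> 'v) \<Rightarrow> 'v set \<Rightarrow> 'v set"
  for z add sc S where
  lspan_zero: "z \<in> lspan z add sc S"
| lspan_gen: "x \<in> S \<Longrightarrow> x \<in> lspan z add sc S"
| lspan_add: "x \<in> lspan z add sc S \<Longrightarrow> y \<in> lspan z add sc S \<Longrightarrow> add x y \<in> lspan z add sc S"
| lspan_scale: "x \<in> lspan z add sc S \<Longrightarrow> sc c x \<in> lspan z add sc S"

text \<open>Lower central series of a Lie algebra with carrier C:
  lcs ... C k = L^k for k \<ge> 1 (L^1 = L, L^(k+1) = [L, L^k]); index 0 is set to L by convention.\<close>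
fun lcs :: "'v \<Rightarrow> ('v \<Rightarrow> 'v \<Rightarrow> 'v) \<Rightarrow> ('k \<Rightarrow> 'v \<Rightarrow> 'v) \<Rightarrow> ('v \<Rightarrow> 'v \<Rightarrow> 'v) \<Rightarrow> 'v set \<Rightarrow> nat \<Rightarrow> 'v set"
  where
  "lcs z add sc br C 0 = C"
| "lcs z add sc br C (Suc 0) = C"
| "lcs z add sc br C (Suc (Suc n)) =
     lspan z add sc {br x y | x y. x \<in> C \<and> y \<in> lcs z add sc br C (Suc n)}"

definition nilpotent_step :: "'v \<Rightarrow> ('v \<Rightarrow> 'v \<Rightarrow> 'v) \<Rightarrow> ('k \<Rightarrow> 'v \<Rightarrow> 'v) \<Rightarrow> ('v \<Rightarrow> 'v \<Rightarrow> 'v) \<Rightarrow> 'v set \<Rightarrow> nat \<Rightarrow> bool"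
  where
  "nilpotent_step z add sc br C t \<longleftrightarrow>
     lcs z add sc br C (Suc t) = {z} \<and> (1 \<le> t \<longrightarrow> lcs z add sc br C t \<noteq> {z})"

definition fin_dim :: "('k::field \<Rightarrow> 'v::ab_group_add \<Rightarrow> 'v) \<Rightarrow> bool" where
  "fin_dim sc \<longleftrightarrow> (\<exists>S. finite S \<and> module.span sc S = UNIV)"

definition lie_algebra :: "('k::field \<Rightarrow> 'v::ab_group_add \<Rightarrow> 'v) \<Rightarrow> ('v \<Rightarrow> 'v \<Rightarrow> 'v) \<Rightarrow> bool" where
  "lie_algebra sc br \<longleftrightarrow> vector_space sc
     \<and> (\<forall>y. Vector_Spaces.linear sc sc (\<lambda>x. br x y))
     \<and> (\<forall>x. Vector_Spaces.linear sc sc (br x))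
     \<and> (\<forall>x. br x x = 0)
     \<and> (\<forall>x y z. br x (br y z) + br y (br z x) + br z (br x y) = 0)"

definition quadratic_lie :: "('k::field \<Rightarrow> 'v::ab_group_add \<Rightarrow> 'v) \<Rightarrow> ('v \<Rightarrow> 'v \<Rightarrow> 'v) \<Rightarrow> ('v \<Rightarrow> 'v \<Rightarrow> 'k) \<Rightarrow> bool" where
  "quadratic_lie sc br f \<longleftrightarrow> lie_algebra sc br
     \<and> (\<forall>x. Vector_Spaces.linear sc (*) (f x))
     \<and> (\<forall>x y. f x y = f y x)
     \<and> (\<forall>x. (\<forall>y. f x y = 0) \<longrightarrow> x = 0)
     \<and> (\<forall>x y z. f (br x y) z + f y (br x z) = 0)"

definition der_f :: "('k::field \<Rightarrow> 'v::ab_group_add \<Rightarrow> 'v) \<Rightarrow> ('v \<Rightarrow> 'v \<Rightarrow> 'v) \<Rightarrow> ('v \<Rightarrow> 'v \<Rightarrow> 'k) \<Rightarrow> ('v \<Rightarrow> 'v) \<Rightarrow> bool" where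
  "der_f sc br f d \<longleftrightarrow> Vector_Spaces.linear sc sc d
     \<and> (\<forall>x y. d (br x y) = br (d x) y + br x (d y))
     \<and> (\<forall>x y. f (d x) y + f x (d y) = 0)"

definition lie_hom_derf :: "('k::field \<Rightarrow> 'a::ab_group_add \<Rightarrow> 'a) \<Rightarrow> ('a \<Rightarrow> 'a \<Rightarrow> 'a) \<Rightarrow> ('a \<Rightarrow> 'a \<Rightarrow> 'k)
    \<Rightarrow> ('k \<Rightarrow> 'b::ab_group_add \<Rightarrow> 'b) \<Rightarrow> ('b \<Rightarrow> 'b \<Rightarrow> 'b) \<Rightarrow> ('b \<Rightarrow> 'a \<Rightarrow> 'a) \<Rightarrow> bool" where
  "lie_hom_derf sA brA f sB brB \<phi> \<longleftrightarrow>
       (\<forall>b. der_f sA brA f (\<phi> b))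
     \<and> (\<forall>c b b' a. \<phi> (sB c b + b') a = sA c (\<phi> b a) + \<phi> b' a)
     \<and> (\<forall>b b' a. \<phi> (brB b b') a = \<phi> b (\<phi> b' (a)) - \<phi> b' (\<phi> b a))"

text \<open>The double extension A_B = B \<oplus> A \<oplus> B*, elements represented as triples (b, a, beta)
with beta a linear functional on B.\<close>
definition de_carrier :: "('k::field \<Rightarrow> 'b::ab_group_add \<Rightarrow> 'b) \<Rightarrow> ('b \<times> 'a \<times> ('b \<Rightarrow> 'k)) set" where
  "de_carrier sB = {(b, a, \<beta>). Vector_Spaces.linear sB (*) \<beta>}"

definition de_zero :: "'b::ab_group_add \<times> 'a::ab_group_add \<times> ('b \<Rightarrow> 'k::field)" where
  "de_zero = (0, 0, \<lambda>_. 0)"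

definition de_add :: "'b::ab_group_add \<times> 'a::ab_group_add \<times> ('b \<Rightarrow> 'k::field)
    \<Rightarrow> 'b \<times> 'a \<times> ('b \<Rightarrow> 'k) \<Rightarrow> 'b \<times> 'a \<times> ('b \<Rightarrow> 'k)" where
  "de_add = (\<lambda>(b, a, \<beta>) (b', a', \<beta>'). (b + b', a + a', \<lambda>x. \<beta> x + \<beta>' x))"

definition de_scale :: "('k::field \<Rightarrow> 'b::ab_group_add \<Rightarrow> 'b) \<Rightarrow> ('k \<Rightarrow> 'a::ab_group_add \<Rightarrow> 'a)
    \<Rightarrow> 'k \<Rightarrow> 'b \<times> 'a \<times> ('b \<Rightarrow> 'k) \<Rightarrow> 'b \<times> 'a \<times> ('b \<Rightarrow> 'k)" where
  "de_scale sB sA = (\<lambda>c (b, a, \<beta>). (sB c b, sA c a, \<lambda>x. c * \<beta> x))"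

text \<open>[b+a+beta, b'+a'+beta'] = [b,b']_B + phi(b)a' - phi(b')a + [a,a']_A + w(a,a')
   + ad*(b)beta' - ad*(b')beta, with w(a,a')(x) = f(phi(x)a, a') and ad*(b)(beta)(x) = -beta([b,x]).\<close>
definition de_bracket :: "('b::ab_group_add \<Rightarrow> 'b \<Rightarrow> 'b) \<Rightarrow> ('a::ab_group_add \<Rightarrow> 'a \<Rightarrow> 'a)
    \<Rightarrow> ('a \<Rightarrow> 'a \<Rightarrow> 'k::field) \<Rightarrow> ('b \<Rightarrow> 'a \<Rightarrow> 'a)
    \<Rightarrow> 'b \<times> 'a \<times> ('b \<Rightarrow> 'k) \<Rightarrow> 'b \<times> 'a \<times> ('b \<Rightarrow> 'k) \<Rightarrow> 'b \<times> 'a \<times> ('b \<Rightarrow> 'k)" where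
  "de_bracket brB brA f \<phi> = (\<lambda>(b, a, \<beta>) (b', a', \<beta>').
     (brB b b', \<phi> b a' - \<phi> b' a + brA a a',
      \<lambda>x. f (\<phi> x a) a' + (- \<beta>' (brB b x)) - (- \<beta> (brB b' x))))"

text \<open>The form f_B (not needed for the nilpotency statement, recorded for completeness).\<close>
definition de_form :: "('a \<Rightarrow> 'a \<Rightarrow> 'k::field) \<Rightarrow> 'b \<times> 'a \<times> ('b \<Rightarrow> 'k) \<Rightarrow> 'b \<times> 'a \<times> ('b \<Rightarrow> 'k) \<Rightarrow> 'k" where
  "de_form f = (\<lambda>(b, a, \<beta>) (b', a', \<beta>'). \<beta> b' + \<beta>' b + f a a')"

end

theory Submission
  imports Defs
begin

text \<open>The map a \<mapsto> (0, a, 0) is not a Lie algebra map into the double extension, but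
a bracket of two elements with vanishing B-component again has vanishing B-component, and its
A-component is the bracket in A, whatever the B*-components are. Hence, along the lower central
series, every element of A^k is the A-component of some element (0, a, \<beta>) of A_B^k, so
A^(t+1) = 0, and the least such index is the nilpotency step of A.\<close>

lemma lspan_least:
  assumes "z \<in> T" and "S \<subseteq> T"
    and "\<And>x y. x \<in> T \<Longrightarrow> y \<in> T \<Longrightarrow> add x y \<in> T"
    and "\<And>c x. x \<in> T \<Longrightarrow> sc c x \<in> T"
  shows "lspan z add sc S \<subseteq> T"
proof
  fix x assume "x \<in> lspan z add sc S"
  then show "x \<in> T" by induction (use assms in blast)+
qed

lemma zero_in_lcs: "z \<in> C \<Longrightarrow> z \<in> lcs z add sc br C k"
  by (cases "(z, add, sc, br, C, k)" rule: lcs.cases) (auto intro: lspan_zero)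

lemma nilpotent_step_Least:
  assumes "lcs z add sc br C (Suc t) = {z}"
  shows "\<exists>n\<le>t. nilpotent_step z add sc br C n"
proof -
  let ?P = "\<lambda>n. lcs z add sc br C (Suc n) = {z}"
  define n where "n = (LEAST n. ?P n)"
  have "?P n" unfolding n_def by (rule LeastI) (rule assms)
  moreover have "n \<le> t" unfolding n_def by (rule Least_le) (rule assms)
  moreover have "lcs z add sc br C n \<noteq> {z}" if "1 \<le> n"
  proof -
    obtain m where m: "n = Suc m" using \<open>1 \<le> n\<close> by (cases n) auto
    then have "\<not> ?P m" using not_less_Least[of m ?P] by (simp add: n_def)
    then show ?thesis using m by simp
  qed
  ultimately show ?thesis unfolding nilpotent_step_def by blast
qed

lemma lie_algebra_bracket_zero_left:
  assumes "lie_algebra sc br"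
  shows "br 0 y = 0"
proof -
  have "vector_space sc" and "Vector_Spaces.linear sc sc (\<lambda>x. br x y)"
    using assms by (simp_all add: lie_algebra_def)
  then show ?thesis
    using vector_space_pair.linear_0[of sc sc] by (simp add: vector_space_pair_def)
qed

lemma lie_hom_derf_zero:
  assumes "vector_space sA" and "vector_space sB" and "lie_hom_derf sA brA f sB brB \<phi>"
  shows "\<phi> 0 a = 0"
proof -
  have "\<phi> (sB 1 0 + 0) a = sA 1 (\<phi> 0 a) + \<phi> 0 a"
    using assms(3) unfolding lie_hom_derf_def by blast
  then show ?thesis
    using assms(1,2)
    by (simp add: module.scale_one module.scale_zero_right module_iff_vector_space)
qed

lemma zero_functional_in_de_carrier:
  assumes "vector_space sB"
  shows "(b, a, \<lambda>_. 0) \<in> de_carrier sB"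
  using assms
  by (simp add: de_carrier_def Vector_Spaces.linear_def module_hom_def module_hom_axioms_def
      vector_space_def module_iff_vector_space algebra_simps)

lemma lcs_double_extension_lift:
  fixes sA :: "'k::field \<Rightarrow> 'a::ab_group_add \<Rightarrow> 'a"
    and sB :: "'k \<Rightarrow> 'b::ab_group_add \<Rightarrow> 'b"
  assumes vsB: "vector_space sB" and "brB 0 0 = 0" and "\<And>a. \<phi> 0 a = 0"
    and "a \<in> lcs 0 (+) sA brA UNIV (Suc n)"
  shows "\<exists>\<beta>. (0, a, \<beta>) \<in>
    lcs de_zero de_add (de_scale sB sA) (de_bracket brB brA f \<phi>) (de_carrier sB) (Suc n)"
  using assms(4)
proof (induction n arbitrary: a)
  case 0
  then show ?case using zero_functional_in_de_carrier[OF vsB, of 0 a] by auto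
next
  case (Suc n)
  let ?LB = "lcs de_zero de_add (de_scale sB sA) (de_bracket brB brA f \<phi>) (de_carrier sB)"
  let ?G = "{brA x y | x y. x \<in> UNIV \<and> y \<in> lcs 0 (+) sA brA UNIV (Suc n)}"
  let ?T = "{a. \<exists>\<beta>. (0, a, \<beta>) \<in> ?LB (Suc (Suc n))}"
  have "lspan 0 (+) sA ?G \<subseteq> ?T"
  proof (rule lspan_least)
    have "de_zero \<in> ?LB (Suc (Suc n))" by (simp add: lspan_zero)
    then show "0 \<in> ?T" by (auto simp: de_zero_def)
  next
    show "?G \<subseteq> ?T"
    proof clarify
      fix x y :: 'a assume "y \<in> lcs 0 (+) sA brA UNIV (Suc n)"
      then obtain \<beta> where "(0, y, \<beta>) \<in> ?LB (Suc n)" using Suc.IH by blast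
      moreover have "(0, x, \<lambda>_. 0) \<in> de_carrier sB"
        by (rule zero_functional_in_de_carrier[OF vsB])
      ultimately have
          "de_bracket brB brA f \<phi> (0, x, \<lambda>_. 0) (0, y, \<beta>) \<in> ?LB (Suc (Suc n))"
        by (simp only: lcs.simps) (rule lspan_gen, blast)
      moreover have
          "\<exists>\<gamma>. de_bracket brB brA f \<phi> (0, x, \<lambda>_. 0) (0, y, \<beta>) = (0, brA x y, \<gamma>)"
        using assms(2,3) by (simp add: de_bracket_def)
      ultimately show "\<exists>\<gamma>. (0, brA x y, \<gamma>) \<in> ?LB (Suc (Suc n))" by metis
    qed
  next
    fix u v assume "u \<in> ?T" and "v \<in> ?T"
    then obtain \<beta> \<gamma>
      where "(0, u, \<beta>) \<in> ?LB (Suc (Suc n))" and "(0, v, \<gamma>) \<in> ?LB (Suc (Suc n))"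
      by blast
    then have "de_add (0, u, \<beta>) (0, v, \<gamma>) \<in> ?LB (Suc (Suc n))" by (simp add: lspan_add)
    then show "u + v \<in> ?T" by (auto simp: de_add_def)
  next
    fix c u assume "u \<in> ?T"
    then obtain \<beta> where "(0, u, \<beta>) \<in> ?LB (Suc (Suc n))" by blast
    then have "de_scale sB sA c (0, u, \<beta>) \<in> ?LB (Suc (Suc n))" by (simp add: lspan_scale)
    then show "sA c u \<in> ?T"
      using vsB by (auto simp: de_scale_def module.scale_zero_right module_iff_vector_space)
  qed
  then show ?case using Suc.prems by auto
qed

theorem lemma2p5:
  fixes sA :: "'k::field_char_0 \<Rightarrow> 'a::ab_group_add \<Rightarrow> 'a"
    and brA :: "'a \<Rightarrow> 'a \<Rightarrow> 'a"
    and f :: "'a \<Rightarrow> 'a \<Rightarrow> 'k"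
    and sB :: "'k \<Rightarrow> 'b::ab_group_add \<Rightarrow> 'b"
    and brB :: "'b \<Rightarrow> 'b \<Rightarrow> 'b"
    and \<phi> :: "'b \<Rightarrow> 'a \<Rightarrow> 'a"
    and t :: nat
  assumes "quadratic_lie sA brA f" and "fin_dim sA"
    and "lie_algebra sB brB" and "fin_dim sB"
    and "lie_hom_derf sA brA f sB brB \<phi>"
    and "nilpotent_step de_zero de_add (de_scale sB sA) (de_bracket brB brA f \<phi>) (de_carrier sB) t"
  shows "\<exists>n\<le>t. nilpotent_step 0 (+) sA brA UNIV n"
proof -
  have vsA: "vector_space sA" using assms(1) by (simp add: quadratic_lie_def lie_algebra_def)
  have vsB: "vector_space sB" using assms(3) by (simp add: lie_algebra_def)
  note lift = lcs_double_extension_lift[where sB = sB and brB = brB and \<phi> = \<phi>, OF vsB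
      lie_algebra_bracket_zero_left[OF assms(3)] lie_hom_derf_zero[OF vsA vsB assms(5)]]
  have "lcs 0 (+) sA brA UNIV (Suc t) \<subseteq> {0}"
  proof
    fix a assume "a \<in> lcs 0 (+) sA brA UNIV (Suc t)"
    then obtain \<beta> where "(0, a, \<beta>) \<in>
        lcs de_zero de_add (de_scale sB sA) (de_bracket brB brA f \<phi>) (de_carrier sB) (Suc t)"
      using lift by blast
    with assms(6) show "a \<in> {0}" by (simp add: nilpotent_step_def de_zero_def)
  qed
  then have "lcs 0 (+) sA brA UNIV (Suc t) = {0}" using zero_in_lcs[of 0 UNIV] by blast
  then show ?thesis by (rule nilpotent_step_Least)
qed

end
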